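(* Let $\mathcal{U}$ be a UEC-representative. Then the set of maximal DAGs in the UEC of $\mathcal{U}$ is exactly one Markov equivalence class of DAGs.
   Context: For a DAG $\mathcal{D}$, a trek is a path with no repeated vertices and no collider; the unconditional dependence graph $\mathcal{U}^\mathcal{D}$ has an edge between distinct $v,w$ iff there is a trek between them. A UEC-representative is an undirected graph $\mathcal{U}$ with $\mathcal{U}=\mathcal{U}^\mathcal{D}$ for some DAG on the same vertex set; its UEC is $\{\mathcal{D}:\mathcal{U}^\mathcal{D}=\mathcal{U}\}$. A DAG in the UEC is maximal if every DAG obtained by adding one edge to it is not in the UEC. Two DAGs are Markov equivalent if they have the same d-separation statements, equivalently the same skeleton and the same v-structures. *)

theory Defs
  imports Main
begin

definition dag :: "'a set \<Rightarrow> ('a \<times> 'a) set \<Rightarrow> bool" where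
  "dag V E \<longleftrightarrow> E \<subseteq> V \<times> V \<and> acyclic E"

definition adj :: "('a \<times> 'a) set \<Rightarrow> 'a \<Rightarrow> 'a \<Rightarrow> bool" where
  "adj E x y \<longleftrightarrow> (x, y) \<in> E \<or> (y, x) \<in> E"

definition is_path :: "('a \<times> 'a) set \<Rightarrow> 'a list \<Rightarrow> bool" where
  "is_path E xs \<longleftrightarrow> xs \<noteq> [] \<and> distinct xs \<and>
     (\<forall>i. Suc i < length xs \<longrightarrow> adj E (xs ! i) (xs ! Suc i))"

definition collider_free :: "('a \<times> 'a) set \<Rightarrow> 'a list \<Rightarrow> bool" where
  "collider_free E xs \<longleftrightarrow>
     (\<forall>i. 0 < i \<and> Suc i < length xs \<longrightarrow>
        \<not> ((xs ! (i - 1), xs ! i) \<in> E \<and> (xs ! Suc i, xs ! i) \<in> E))"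

definition is_trek :: "('a \<times> 'a) set \<Rightarrow> 'a \<Rightarrow> 'a \<Rightarrow> bool" where
  "is_trek E v w \<longleftrightarrow>
     (\<exists>xs. is_path E xs \<and> collider_free E xs \<and> hd xs = v \<and> last xs = w)"

text \<open>Unconditional dependence graph, as a symmetric irreflexive edge relation on V.\<close>
definition udg :: "'a set \<Rightarrow> ('a \<times> 'a) set \<Rightarrow> ('a \<times> 'a) set" where
  "udg V E = {(v, w). v \<in> V \<and> w \<in> V \<and> v \<noteq> w \<and> is_trek E v w}"

definition uec_representative :: "'a set \<Rightarrow> ('a \<times> 'a) set \<Rightarrow> bool" where
  "uec_representative V U \<longleftrightarrow> (\<exists>E. dag V E \<and> udg V E = U)"

definition uec :: "'a set \<Rightarrow> ('a \<times> 'a) set \<Rightarrow> ('a \<times> 'a) set set" where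
  "uec V U = {E. dag V E \<and> udg V E = U}"

definition maximal_in_uec :: "'a set \<Rightarrow> ('a \<times> 'a) set \<Rightarrow> ('a \<times> 'a) set \<Rightarrow> bool" where
  "maximal_in_uec V U E \<longleftrightarrow> E \<in> uec V U \<and>
     (\<forall>x y. (x, y) \<notin> E \<and> dag V (insert (x, y) E) \<longrightarrow> insert (x, y) E \<notin> uec V U)"

definition skeleton :: "('a \<times> 'a) set \<Rightarrow> ('a \<times> 'a) set" where
  "skeleton E = {(x, y). adj E x y}"

definition v_structures :: "('a \<times> 'a) set \<Rightarrow> ('a \<times> 'a \<times> 'a) set" where
  "v_structures E = {(a, b, c). (a, b) \<in> E \<and> (c, b) \<in> E \<and> a \<noteq> c \<and> \<not> adj E a c}"

definition markov_equivalent :: "('a \<times> 'a) set \<Rightarrow> ('a \<times> 'a) set \<Rightarrow> bool" where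
  "markov_equivalent E F \<longleftrightarrow> skeleton E = skeleton F \<and> v_structures E = v_structures F"

end

theory Submission
  imports Defs
begin

text \<open>In an acyclic graph two vertices are joined by a trek iff they have a common ancestor, so
  membership in the UEC of \<open>U\<close> only depends on common ancestry. Write \<open>x \<preceq> y\<close> if every vertex
  dependent on \<open>x\<close> is dependent on \<open>y\<close>. In a DAG of the UEC ancestors are \<open>\<preceq>\<close>-below their
  descendants, and an edge \<open>x \<rightarrow> y\<close> with \<open>x \<preceq> y\<close> can be added without changing common
  ancestry. Hence a DAG of the UEC is maximal iff it has the edge \<open>x \<rightarrow> y\<close> for all \<open>x \<preceq> y\<close>
  unless \<open>y\<close> is already an ancestor of \<open>x\<close>. In such a DAG adjacency is \<open>\<preceq>\<close>-comparability and
  v-structures are determined by \<open>\<preceq>\<close>, so all maximal DAGs are Markov equivalent. Conversely, a DAG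
  Markov equivalent to a maximal one inherits this saturation, and its edges are \<open>\<preceq>\<close>-increasing
  because a reversed edge would be forced into a v-structure; in such a DAG two vertices have a
  common ancestor iff they have a common \<open>\<preceq>\<close>-lower bound, so it lies in the UEC and is maximal.
  Finiteness guarantees that a maximal DAG exists.\<close>

section \<open>Treks and common ancestors\<close>

definition common_ancestor :: "('a \<times> 'a) set \<Rightarrow> 'a \<Rightarrow> 'a \<Rightarrow> bool" where
  "common_ancestor E v w \<longleftrightarrow> (\<exists>c. (c, v) \<in> E\<^sup>* \<and> (c, w) \<in> E\<^sup>*)"

lemma common_ancestor_refl: "common_ancestor E v v"
  unfolding common_ancestor_def by blast

lemma common_ancestor_sym: "common_ancestor E v w \<Longrightarrow> common_ancestor E w v"
  unfolding common_ancestor_def by blast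

lemma is_path_Cons_Cons:
  "is_path E (x # y # zs) \<longleftrightarrow> adj E x y \<and> x \<notin> set (y # zs) \<and> is_path E (y # zs)"
proof -
  have "(\<forall>i. Suc i < length (x # y # zs) \<longrightarrow> P i) \<longleftrightarrow>
        P 0 \<and> (\<forall>i. Suc i < length (y # zs) \<longrightarrow> P (Suc i))" for P
    by (metis Suc_less_eq length_Cons not0_implies_Suc zero_less_Suc)
  then show ?thesis unfolding is_path_def by auto
qed

lemma collider_free_short: "length xs \<le> 2 \<Longrightarrow> collider_free E xs"
  unfolding collider_free_def by auto

lemma collider_free_Cons_Cons_Cons:
  "collider_free E (x # y # z # zs) \<longleftrightarrow>
     \<not> ((x, y) \<in> E \<and> (z, y) \<in> E) \<and> collider_free E (y # z # zs)"
  (is "collider_free E ?xs \<longleftrightarrow> ?head \<and> collider_free E ?ys")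
proof
  assume cf: "collider_free E ?xs"
  show "?head \<and> collider_free E ?ys"
  proof
    show ?head using cf[unfolded collider_free_def, rule_format, of 1] by simp
    show "collider_free E ?ys" unfolding collider_free_def
    proof (intro allI impI)
      fix i assume "0 < i \<and> Suc i < length ?ys"
      with cf[unfolded collider_free_def, rule_format, of "Suc i"]
      show "\<not> ((?ys ! (i - 1), ?ys ! i) \<in> E \<and> (?ys ! Suc i, ?ys ! i) \<in> E)"
        by (cases i) auto
    qed
  qed
next
  assume rhs: "?head \<and> collider_free E ?ys"
  show "collider_free E ?xs" unfolding collider_free_def
  proof (intro allI impI)
    fix i assume i: "0 < i \<and> Suc i < length ?xs"
    then obtain j where j: "i = Suc j" using gr0_implies_Suc by blast
    show "\<not> ((?xs ! (i - 1), ?xs ! i) \<in> E \<and> (?xs ! Suc i, ?xs ! i) \<in> E)"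
    proof (cases j)
      case 0
      then show ?thesis using rhs j by simp
    next
      case (Suc k)
      then show ?thesis
        using rhs[THEN conjunct2, unfolded collider_free_def, rule_format, of j] i j by simp
    qed
  qed
qed

lemma collider_free_tl: "collider_free E (x # xs) \<Longrightarrow> collider_free E xs"
proof (cases xs)
  case (Cons y ys)
  assume "collider_free E (x # xs)"
  then show ?thesis
    using Cons collider_free_Cons_Cons_Cons[of E x y] collider_free_short[of "[y]" E]
    by (cases ys) auto
qed (simp add: collider_free_short)

lemma collider_free_drop: "collider_free E xs \<Longrightarrow> collider_free E (drop k xs)"
proof (induction k arbitrary: xs)
  case (Suc k)
  then show ?case
    by (cases xs) (auto simp: collider_free_short dest: collider_free_tl)
qed simp

lemma is_path_rev: "is_path E xs \<Longrightarrow> is_path E (rev xs)"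
  unfolding is_path_def
proof (elim conjE, intro conjI allI impI)
  assume adjs: "\<forall>i. Suc i < length xs \<longrightarrow> adj E (xs ! i) (xs ! Suc i)"
  fix i assume i: "Suc i < length (rev xs)"
  define k where "k = length xs - Suc (Suc i)"
  have "rev xs ! i = xs ! Suc k" "rev xs ! Suc i = xs ! k"
    using i unfolding k_def by (simp_all add: rev_nth Suc_diff_Suc)
  moreover have "Suc k < length xs" using i unfolding k_def by simp
  ultimately show "adj E (rev xs ! i) (rev xs ! Suc i)"
    using adjs unfolding adj_def by auto
qed auto

lemma collider_free_rev: "collider_free E xs \<Longrightarrow> collider_free E (rev xs)"
  unfolding collider_free_def
proof (intro allI impI)
  assume cf: "\<forall>j. 0 < j \<and> Suc j < length xs \<longrightarrow>
    \<not> ((xs ! (j - 1), xs ! j) \<in> E \<and> (xs ! Suc j, xs ! j) \<in> E)"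
  fix i assume i: "0 < i \<and> Suc i < length (rev xs)"
  define j where "j = length xs - Suc i"
  have "rev xs ! i = xs ! j" "rev xs ! Suc i = xs ! (j - 1)" "rev xs ! (i - 1) = xs ! Suc j"
    using i unfolding j_def by (auto simp: rev_nth Suc_diff_Suc)
  moreover have "0 < j \<and> Suc j < length xs" using i unfolding j_def by auto
  ultimately show "\<not> ((rev xs ! (i - 1), rev xs ! i) \<in> E \<and> (rev xs ! Suc i, rev xs ! i) \<in> E)"
    using cf by auto
qed

lemma is_trek_refl: "is_trek E v v"
  unfolding is_trek_def is_path_def using collider_free_short[of "[v]" E] by force

lemma is_trek_sym: "is_trek E v w \<Longrightarrow> is_trek E w v"
proof -
  assume "is_trek E v w"
  then obtain xs where xs: "is_path E xs" "collider_free E xs" "hd xs = v" "last xs = w"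
    unfolding is_trek_def by blast
  then have "xs \<noteq> []" unfolding is_path_def by blast
  then have "hd (rev xs) = w" "last (rev xs) = v" using xs(3,4) by (simp_all add: hd_rev last_rev)
  then show ?thesis
    unfolding is_trek_def using is_path_rev[OF xs(1)] collider_free_rev[OF xs(2)]
    by (intro exI[of _ "rev xs"] conjI)
qed

lemma collider_free_path_forward:
  "is_path E (x # y # zs) \<Longrightarrow> collider_free E (x # y # zs) \<Longrightarrow> (x, y) \<in> E
   \<Longrightarrow> (x, last (y # zs)) \<in> E\<^sup>*"
proof (induction zs arbitrary: x y)
  case (Cons z zs)
  have path: "adj E y z" "is_path E (y # z # zs)"
    using Cons.prems(1) unfolding is_path_Cons_Cons[of E x] is_path_Cons_Cons[of E y] by simp_all
  have "(z, y) \<notin> E"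
    using Cons.prems(2,3) unfolding collider_free_Cons_Cons_Cons by simp
  with path(1) have "(y, z) \<in> E" unfolding adj_def by simp
  with Cons.IH[OF path(2) collider_free_tl[OF Cons.prems(2)]]
  have "(y, last (z # zs)) \<in> E\<^sup>*" .
  then show ?case using Cons.prems(3) by simp
qed simp

lemma path_common_ancestor:
  "is_path E xs \<Longrightarrow> collider_free E xs \<Longrightarrow> common_ancestor E (hd xs) (last xs)"
proof (induction xs rule: induct_list012)
  case 1
  then show ?case by (simp add: is_path_def)
next
  case (2 x)
  then show ?case by (simp add: common_ancestor_refl)
next
  case (3 x y zs)
  have "adj E x y" and path: "is_path E (y # zs)"
    using "3.prems"(1) unfolding is_path_Cons_Cons by simp_all
  show ?case
  proof (cases "(x, y) \<in> E")
    case True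
    with "3.prems" have "(x, last (y # zs)) \<in> E\<^sup>*"
      by (rule collider_free_path_forward)
    then show ?thesis unfolding common_ancestor_def by auto
  next
    case False
    with \<open>adj E x y\<close> have "(y, x) \<in> E" unfolding adj_def by blast
    obtain c where "(c, y) \<in> E\<^sup>*" "(c, last (y # zs)) \<in> E\<^sup>*"
      using "3.IH"(2)[OF path collider_free_tl[OF "3.prems"(2)]]
      unfolding common_ancestor_def by auto
    moreover from this(1) \<open>(y, x) \<in> E\<close> have "(c, x) \<in> E\<^sup>*"
      by (rule rtrancl_into_rtrancl)
    ultimately show ?thesis unfolding common_ancestor_def by auto
  qed
qed

lemma is_trek_child:
  assumes "acyclic E" "(u, v) \<in> E" "is_trek E u w"
  shows "is_trek E v w"
proof -
  obtain xs where xs: "is_path E xs" "collider_free E xs" "hd xs = u" "last xs = w"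
    using assms(3) unfolding is_trek_def by blast
  then obtain ys where ys: "xs = u # ys" unfolding is_path_def by (cases xs) auto
  show ?thesis
  proof (cases "v \<in> set xs")
    case True
    then obtain k where k: "k < length xs" "xs ! k = v" by (auto simp: in_set_conv_nth)
    have "is_path E (drop k xs)" using xs(1) k(1) unfolding is_path_def by auto
    moreover have "hd (drop k xs) = v" "last (drop k xs) = w"
      using k xs(4) by (simp_all add: hd_drop_conv_nth)
    ultimately show ?thesis
      unfolding is_trek_def using collider_free_drop[OF xs(2)] by blast
  next
    case False
    have "(v, u) \<notin> E"
    proof
      assume "(v, u) \<in> E"
      then have "(u, u) \<in> E\<^sup>+" using assms(2) by (rule trancl_into_trancl[OF r_into_trancl, rotated])
      with assms(1) show False unfolding acyclic_def by blast
    qed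
    have cf: "collider_free E (v # u # ys)"
    proof (cases ys)
      case Nil
      then show ?thesis by (simp add: collider_free_short)
    next
      case Cons
      then show ?thesis
        using \<open>(v, u) \<notin> E\<close> xs(2) ys by (simp add: collider_free_Cons_Cons_Cons)
    qed
    have path: "is_path E (v # u # ys)"
      using xs(1) ys False assms(2) by (simp add: is_path_Cons_Cons adj_def)
    show ?thesis
      unfolding is_trek_def
      by (rule exI[of _ "v # u # ys"]) (use cf path xs(4) ys in simp)
  qed
qed

lemma is_trek_descendant:
  assumes "acyclic E" "(u, v) \<in> E\<^sup>*" "is_trek E u w"
  shows "is_trek E v w"
  using assms(2,3) by induction (auto intro: is_trek_child[OF assms(1)])

lemma common_ancestor_imp_is_trek:
  assumes "acyclic E" "common_ancestor E v w"
  shows "is_trek E v w"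
proof -
  obtain c where c: "(c, v) \<in> E\<^sup>*" "(c, w) \<in> E\<^sup>*"
    using assms(2) unfolding common_ancestor_def by blast
  have "is_trek E w c" using is_trek_descendant[OF assms(1) c(2) is_trek_refl] .
  then show ?thesis using is_trek_descendant[OF assms(1) c(1) is_trek_sym] by blast
qed

lemma is_trek_iff_common_ancestor:
  assumes "acyclic E"
  shows "is_trek E v w \<longleftrightarrow> common_ancestor E v w"
proof
  assume "is_trek E v w"
  then obtain xs where xs: "is_path E xs" "collider_free E xs" "hd xs = v" "last xs = w"
    unfolding is_trek_def by blast
  show "common_ancestor E v w" using path_common_ancestor[OF xs(1,2)] xs(3,4) by simp
qed (rule common_ancestor_imp_is_trek[OF assms])

lemma udg_conv_common_ancestor:
  "acyclic E \<Longrightarrow> udg V E = {(v, w). v \<in> V \<and> w \<in> V \<and> v \<noteq> w \<and> common_ancestor E v w}"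
  unfolding udg_def by (simp add: is_trek_iff_common_ancestor)

lemma sym_udg: "sym (udg V E)"
  unfolding udg_def by (auto intro: symI is_trek_sym)

section \<open>The dependence preorder and maximality\<close>

definition dep_le :: "'a set \<Rightarrow> ('a \<times> 'a) set \<Rightarrow> 'a \<Rightarrow> 'a \<Rightarrow> bool" where
  "dep_le V U x y \<longleftrightarrow> x \<in> V \<and> y \<in> V \<and> (\<forall>b\<in>V. (x, b) \<in> U\<^sup>= \<longrightarrow> (y, b) \<in> U\<^sup>=)"

lemma dep_le_refl: "x \<in> V \<Longrightarrow> dep_le V U x x"
  unfolding dep_le_def by blast

lemma dep_le_trans: "dep_le V U x y \<Longrightarrow> dep_le V U y z \<Longrightarrow> dep_le V U x z"
  unfolding dep_le_def by blast

lemma uec_acyclic: "D \<in> uec V U \<Longrightarrow> acyclic D"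
  unfolding uec_def dag_def by blast

lemma uec_reflcl_iff_common_ancestor:
  assumes "D \<in> uec V U" "x \<in> V" "y \<in> V"
  shows "(x, y) \<in> U\<^sup>= \<longleftrightarrow> common_ancestor D x y"
proof -
  have "U = udg V D" "acyclic D" using assms(1) unfolding uec_def dag_def by auto
  then show ?thesis
    using assms(2,3) common_ancestor_refl[of D x] by (auto simp: udg_conv_common_ancestor)
qed

lemma ancestor_dep_le:
  assumes D: "D \<in> uec V U" and "(x, y) \<in> D\<^sup>*" "x \<in> V" "y \<in> V"
  shows "dep_le V U x y"
  unfolding dep_le_def
proof (intro conjI ballI impI)
  fix b assume b: "b \<in> V" "(x, b) \<in> U\<^sup>="
  then obtain c where "(c, x) \<in> D\<^sup>*" "(c, b) \<in> D\<^sup>*"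
    using uec_reflcl_iff_common_ancestor[OF D \<open>x \<in> V\<close>] unfolding common_ancestor_def by blast
  with assms(2) have "common_ancestor D y b"
    unfolding common_ancestor_def by (blast intro: rtrancl_trans)
  then show "(y, b) \<in> U\<^sup>=" using uec_reflcl_iff_common_ancestor[OF D \<open>y \<in> V\<close> b(1)] by simp
qed (use assms in auto)

text \<open>A common ancestor reached through a new edge \<open>x \<rightarrow> y\<close> with \<open>x \<preceq> y\<close> can be replaced
  by one avoiding it, since \<open>y\<close> inherits every dependence of \<open>x\<close>.\<close>

lemma common_ancestor_via_dep_le:
  assumes D: "D \<in> uec V U" and le: "dep_le V U x y"
    and "(c, x) \<in> D\<^sup>*" "(y, a) \<in> D\<^sup>*" "(c, b) \<in> D\<^sup>*" "b \<in> V"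
  shows "common_ancestor D a b"
proof -
  have V: "x \<in> V" "y \<in> V" using le unfolding dep_le_def by auto
  have "(x, b) \<in> U\<^sup>="
    using uec_reflcl_iff_common_ancestor[OF D V(1) \<open>b \<in> V\<close>] assms(3,5)
    unfolding common_ancestor_def by blast
  then have "(y, b) \<in> U\<^sup>=" using le \<open>b \<in> V\<close> unfolding dep_le_def by blast
  then obtain c' where "(c', y) \<in> D\<^sup>*" "(c', b) \<in> D\<^sup>*"
    using uec_reflcl_iff_common_ancestor[OF D V(2) \<open>b \<in> V\<close>]
    unfolding common_ancestor_def by blast
  with assms(4) show ?thesis unfolding common_ancestor_def by (blast intro: rtrancl_trans)
qed

lemma common_ancestor_insert_dep_le:
  assumes D: "D \<in> uec V U" and le: "dep_le V U x y" and V: "v \<in> V" "w \<in> V"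
  shows "common_ancestor (insert (x, y) D) v w \<longleftrightarrow> common_ancestor D v w"
proof
  assume "common_ancestor D v w"
  then show "common_ancestor (insert (x, y) D) v w"
    unfolding common_ancestor_def using rtrancl_mono[of D "insert (x, y) D"] by blast
next
  assume "common_ancestor (insert (x, y) D) v w"
  then obtain c where "(c, v) \<in> (insert (x, y) D)\<^sup>*" "(c, w) \<in> (insert (x, y) D)\<^sup>*"
    unfolding common_ancestor_def by blast
  then have "(c, v) \<in> D\<^sup>* \<or> (c, x) \<in> D\<^sup>* \<and> (y, v) \<in> D\<^sup>*"
    and "(c, w) \<in> D\<^sup>* \<or> (c, x) \<in> D\<^sup>* \<and> (y, w) \<in> D\<^sup>*"
    unfolding rtrancl_insert by auto
  then consider
      "(c, v) \<in> D\<^sup>*" "(c, w) \<in> D\<^sup>*"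
    | "(c, v) \<in> D\<^sup>*" "(c, x) \<in> D\<^sup>*" "(y, w) \<in> D\<^sup>*"
    | "(c, x) \<in> D\<^sup>*" "(y, v) \<in> D\<^sup>*" "(c, w) \<in> D\<^sup>*"
    | "(y, v) \<in> D\<^sup>*" "(y, w) \<in> D\<^sup>*"
    by blast
  then show "common_ancestor D v w"
  proof cases
    case 1
    then show ?thesis unfolding common_ancestor_def by blast
  next
    case 2
    then have "common_ancestor D w v" using common_ancestor_via_dep_le[OF D le] V(1) by blast
    then show ?thesis by (rule common_ancestor_sym)
  next
    case 3
    then show ?thesis using common_ancestor_via_dep_le[OF D le] V(2) by blast
  next
    case 4
    then show ?thesis unfolding common_ancestor_def by blast
  qed
qed

lemma uec_insert_dep_le:
  assumes D: "D \<in> uec V U" and acyclic: "acyclic (insert (x, y) D)" and le: "dep_le V U x y"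
  shows "insert (x, y) D \<in> uec V U"
proof -
  have "D \<subseteq> V \<times> V" "acyclic D" "udg V D = U" using D unfolding uec_def dag_def by auto
  moreover have "x \<in> V" "y \<in> V" using le unfolding dep_le_def by auto
  ultimately have "dag V (insert (x, y) D)" using acyclic unfolding dag_def by auto
  moreover have "udg V (insert (x, y) D) = udg V D"
    unfolding udg_conv_common_ancestor[OF acyclic] udg_conv_common_ancestor[OF \<open>acyclic D\<close>]
    using common_ancestor_insert_dep_le[OF D le] by auto
  ultimately show ?thesis using \<open>udg V D = U\<close> unfolding uec_def by auto
qed

definition dep_saturated :: "'a set \<Rightarrow> ('a \<times> 'a) set \<Rightarrow> ('a \<times> 'a) set \<Rightarrow> bool" where
  "dep_saturated V U D \<longleftrightarrow>
     (\<forall>x\<in>V. \<forall>y\<in>V. x \<noteq> y \<longrightarrow> dep_le V U x y \<longrightarrow> (x, y) \<in> D \<or> (y, x) \<in> D\<^sup>*)"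

lemma dep_saturatedD:
  "dep_saturated V U D \<Longrightarrow> dep_le V U x y \<Longrightarrow> x \<noteq> y \<Longrightarrow> (x, y) \<in> D \<or> (y, x) \<in> D\<^sup>*"
  unfolding dep_saturated_def dep_le_def by blast

lemma maximal_in_uec_iff: "maximal_in_uec V U D \<longleftrightarrow> D \<in> uec V U \<and> dep_saturated V U D"
proof
  assume max: "maximal_in_uec V U D"
  then have D: "D \<in> uec V U" unfolding maximal_in_uec_def by blast
  have "dep_saturated V U D" unfolding dep_saturated_def
  proof (intro ballI impI)
    fix x y assume "x \<in> V" "y \<in> V" "x \<noteq> y" "dep_le V U x y"
    show "(x, y) \<in> D \<or> (y, x) \<in> D\<^sup>*"
    proof (rule ccontr)
      assume "\<not> ((x, y) \<in> D \<or> (y, x) \<in> D\<^sup>*)"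
      moreover from this D have "acyclic (insert (x, y) D)" unfolding uec_def dag_def by simp
      moreover from uec_insert_dep_le[OF D this \<open>dep_le V U x y\<close>]
      have "insert (x, y) D \<in> uec V U" "dag V (insert (x, y) D)" unfolding uec_def by auto
      ultimately show False using max unfolding maximal_in_uec_def by blast
    qed
  qed
  with D show "D \<in> uec V U \<and> dep_saturated V U D" by blast
next
  assume D: "D \<in> uec V U \<and> dep_saturated V U D"
  show "maximal_in_uec V U D" unfolding maximal_in_uec_def
  proof (intro conjI allI impI notI)
    fix x y assume new: "(x, y) \<notin> D \<and> dag V (insert (x, y) D)"
      and D': "insert (x, y) D \<in> uec V U"
    then have "acyclic (insert (x, y) D)" "x \<in> V" "y \<in> V" unfolding dag_def by auto
    then have "x \<noteq> y" "(y, x) \<notin> D\<^sup>*" by auto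
    moreover have "dep_le V U x y"
      using ancestor_dep_le[OF D'] \<open>x \<in> V\<close> \<open>y \<in> V\<close> by blast
    ultimately show False using dep_saturatedD[of V U D x y] D new by blast
  qed (use D in blast)
qed

section \<open>DAGs saturated for the dependence preorder\<close>

definition dep_compatible :: "'a set \<Rightarrow> ('a \<times> 'a) set \<Rightarrow> ('a \<times> 'a) set \<Rightarrow> bool" where
  "dep_compatible V U D \<longleftrightarrow> (\<forall>(x, y) \<in> D. dep_le V U x y)"

lemma uec_dep_compatible:
  assumes D: "D \<in> uec V U"
  shows "dep_compatible V U D"
  unfolding dep_compatible_def
proof (intro ballI, clarify)
  fix x y assume "(x, y) \<in> D"
  moreover from this D have "x \<in> V" "y \<in> V" unfolding uec_def dag_def by auto
  ultimately show "dep_le V U x y" by (intro ancestor_dep_le[OF D]) auto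
qed

lemma dep_compatible_rtrancl:
  assumes comp: "dep_compatible V U D" and "(x, y) \<in> D\<^sup>*" "y \<in> V"
  shows "dep_le V U x y"
  using assms(2,3)
proof (induction rule: converse_rtrancl_induct)
  case base
  then show ?case by (rule dep_le_refl)
next
  case (step x z)
  with comp have "dep_le V U x z" unfolding dep_compatible_def by blast
  with step show ?case by (blast intro: dep_le_trans)
qed

lemma adj_iff_dep_comparable:
  assumes acyclic: "acyclic D" and comp: "dep_compatible V U D" and sat: "dep_saturated V U D"
  shows "adj D x y \<longleftrightarrow> x \<in> V \<and> y \<in> V \<and> x \<noteq> y \<and> (dep_le V U x y \<or> dep_le V U y x)"
proof
  assume "adj D x y"
  moreover have "(z, z) \<notin> D" for z using acyclic unfolding acyclic_def by blast
  ultimately show "x \<in> V \<and> y \<in> V \<and> x \<noteq> y \<and> (dep_le V U x y \<or> dep_le V U y x)"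
    using comp unfolding adj_def dep_compatible_def dep_le_def by blast
next
  have edge: "adj D a b" if ab: "a \<in> V" "b \<in> V" "a \<noteq> b" "dep_le V U a b" for a b
  proof -
    from dep_saturatedD[OF sat ab(4,3)] have "(a, b) \<in> D \<or> (b, a) \<in> D\<^sup>*" .
    then show ?thesis
    proof
      assume ba: "(b, a) \<in> D\<^sup>*"
      have "dep_le V U b a" using dep_compatible_rtrancl[OF comp ba ab(1)] .
      from dep_saturatedD[OF sat this] ab(3) have "(b, a) \<in> D \<or> (a, b) \<in> D\<^sup>*" by blast
      moreover have "(a, b) \<notin> D\<^sup>*"
        using antisymD[OF acyclic_impl_antisym_rtrancl[OF acyclic] _ ba] ab(3) by blast
      ultimately show ?thesis unfolding adj_def by blast
    qed (simp add: adj_def)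
  qed
  assume "x \<in> V \<and> y \<in> V \<and> x \<noteq> y \<and> (dep_le V U x y \<or> dep_le V U y x)"
  then show "adj D x y" using edge[of x y] edge[of y x] unfolding adj_def by blast
qed

lemma edge_if_dep_less:
  assumes comp: "dep_compatible V U D" and sat: "dep_saturated V U D"
    and le: "dep_le V U x y" and not_le: "\<not> dep_le V U y x"
  shows "(x, y) \<in> D"
proof -
  have V: "x \<in> V" "y \<in> V" using le unfolding dep_le_def by auto
  with le not_le have "x \<noteq> y" by blast
  with dep_saturatedD[OF sat le] have "(x, y) \<in> D \<or> (y, x) \<in> D\<^sup>*" .
  then show ?thesis using dep_compatible_rtrancl[OF comp _ V(1)] not_le by auto
qed

lemma v_structures_iff_dep_le:
  assumes acyclic: "acyclic D" and comp: "dep_compatible V U D" and sat: "dep_saturated V U D"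
  shows "(a, b, c) \<in> v_structures D \<longleftrightarrow>
    dep_le V U a b \<and> \<not> dep_le V U b a \<and> dep_le V U c b \<and> \<not> dep_le V U b c \<and>
    \<not> dep_le V U a c \<and> \<not> dep_le V U c a \<and> a \<noteq> c"
  (is "_ \<longleftrightarrow> ?dep")
proof
  note adj_iff = adj_iff_dep_comparable[OF acyclic comp sat]
  assume "(a, b, c) \<in> v_structures D"
  then have v: "(a, b) \<in> D" "(c, b) \<in> D" "a \<noteq> c" "\<not> adj D a c"
    unfolding v_structures_def by auto
  then have le: "dep_le V U a b" "dep_le V U c b" using comp unfolding dep_compatible_def by auto
  then have "a \<in> V" "c \<in> V" unfolding dep_le_def by auto
  with v(3,4) have "\<not> dep_le V U a c" "\<not> dep_le V U c a" using adj_iff by blast+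
  with le v(3) show ?dep by (meson dep_le_trans)
next
  assume ?dep
  then have "(a, b) \<in> D" "(c, b) \<in> D" using edge_if_dep_less[OF comp sat] by blast+
  moreover have "\<not> adj D a c" using \<open>?dep\<close> adj_iff_dep_comparable[OF acyclic comp sat] by blast
  ultimately show "(a, b, c) \<in> v_structures D" using \<open>?dep\<close> unfolding v_structures_def by blast
qed

lemma markov_equivalent_if_dep_saturated:
  assumes "acyclic D" "dep_compatible V U D" "dep_saturated V U D"
    and "acyclic M" "dep_compatible V U M" "dep_saturated V U M"
  shows "markov_equivalent D M"
proof -
  have "adj D = adj M"
    using adj_iff_dep_comparable[OF assms(1-3)] adj_iff_dep_comparable[OF assms(4-6)]
    by (simp add: fun_eq_iff)
  then have "skeleton D = skeleton M" unfolding skeleton_def by simp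
  moreover have "v_structures D = v_structures M"
    using v_structures_iff_dep_le[OF assms(1-3)] v_structures_iff_dep_le[OF assms(4-6)] by auto
  ultimately show ?thesis unfolding markov_equivalent_def by blast
qed

lemma common_ancestor_iff_dep_le:
  assumes wf: "wf D" and comp: "dep_compatible V U D" and sat: "dep_saturated V U D"
    and V: "v \<in> V" "w \<in> V"
  shows "common_ancestor D v w \<longleftrightarrow> (\<exists>t. dep_le V U t v \<and> dep_le V U t w)"
proof
  assume "common_ancestor D v w"
  then obtain c where "(c, v) \<in> D\<^sup>*" "(c, w) \<in> D\<^sup>*" unfolding common_ancestor_def by blast
  then have "dep_le V U c v" "dep_le V U c w"
    using dep_compatible_rtrancl[OF comp] V by simp_all
  then show "\<exists>t. dep_le V U t v \<and> dep_le V U t w" by blast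
next
  assume "\<exists>t. dep_le V U t v \<and> dep_le V U t w"
  then obtain t where "t \<in> {t. dep_le V U t v \<and> dep_le V U t w}" by blast
  from wfE_min[OF wf this] obtain t0 where t0: "dep_le V U t0 v" "dep_le V U t0 w"
    and min: "\<And>s. (s, t0) \<in> D \<Longrightarrow> \<not> (dep_le V U s v \<and> dep_le V U s w)"
    by auto
  text \<open>By saturation everything above the \<open>D\<close>-minimal lower bound \<open>t0\<close> descends from it.\<close>
  have "(t0, z) \<in> D\<^sup>*" if le: "dep_le V U t0 z" for z
  proof (cases "t0 = z")
    case False
    with dep_saturatedD[OF sat le] have "(t0, z) \<in> D \<or> (z, t0) \<in> D\<^sup>*" .
    moreover have "(z, t0) \<notin> D\<^sup>*"
    proof
      assume "(z, t0) \<in> D\<^sup>*"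
      with False obtain s where "(s, t0) \<in> D" by (auto elim: rtranclE)
      moreover from this comp have "dep_le V U s t0" unfolding dep_compatible_def by blast
      then have "dep_le V U s v" "dep_le V U s w" using t0 by (blast intro: dep_le_trans)+
      ultimately show False using min by blast
    qed
    ultimately show ?thesis by blast
  qed simp
  with t0 show "common_ancestor D v w" unfolding common_ancestor_def by blast
qed

lemma udg_eq_if_dep_saturated:
  assumes "wf D" "dep_compatible V U D" "dep_saturated V U D"
    and "wf M" "dep_compatible V U M" "dep_saturated V U M"
  shows "udg V D = udg V M"
  unfolding udg_conv_common_ancestor[OF wf_acyclic[OF assms(1)]]
    udg_conv_common_ancestor[OF wf_acyclic[OF assms(4)]]
  using common_ancestor_iff_dep_le[OF assms(1-3)] common_ancestor_iff_dep_le[OF assms(4-6)]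
  by auto

section \<open>Markov equivalence with a maximal DAG\<close>

lemma markov_equivalent_adj: "markov_equivalent D M \<Longrightarrow> adj D x y \<longleftrightarrow> adj M x y"
proof -
  assume "markov_equivalent D M"
  then have "(x, y) \<in> skeleton D \<longleftrightarrow> (x, y) \<in> skeleton M"
    unfolding markov_equivalent_def by simp
  then show ?thesis unfolding skeleton_def by simp
qed

lemma markov_equivalent_dep_saturated:
  assumes ME: "markov_equivalent D M"
    and "acyclic M" "dep_compatible V U M" "dep_saturated V U M"
  shows "dep_saturated V U D"
  unfolding dep_saturated_def
proof (intro ballI impI)
  fix x y assume "x \<in> V" "y \<in> V" "x \<noteq> y" "dep_le V U x y"
  then have "adj M x y" using adj_iff_dep_comparable[OF assms(2-4)] by simp
  then have "adj D x y" using markov_equivalent_adj[OF ME] by simp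
  then show "(x, y) \<in> D \<or> (y, x) \<in> D\<^sup>*" unfolding adj_def by auto
qed

text \<open>An edge \<open>x \<rightarrow> y\<close> of \<open>D\<close> against the preorder would make \<open>y \<rightarrow> x \<leftarrow> c\<close> a v-structure
  of \<open>M\<close>, where \<open>c\<close> is a common ancestor of \<open>x\<close> and a vertex dependent on \<open>x\<close> but not on \<open>y\<close>.\<close>

lemma markov_equivalent_dep_compatible:
  assumes ME: "markov_equivalent D M" and acyclic: "acyclic D"
    and M: "M \<in> uec V U" and sat: "dep_saturated V U M"
  shows "dep_compatible V U D"
  unfolding dep_compatible_def
proof clarify
  fix x y assume xy: "(x, y) \<in> D"
  have acM: "acyclic M" and compM: "dep_compatible V U M"
    using uec_acyclic[OF M] uec_dep_compatible[OF M] .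
  have "adj M x y" using xy markov_equivalent_adj[OF ME] unfolding adj_def by blast
  then have V: "x \<in> V" "y \<in> V" "x \<noteq> y" and comparable: "dep_le V U x y \<or> dep_le V U y x"
    using adj_iff_dep_comparable[OF acM compM sat] by simp_all
  show "dep_le V U x y"
  proof (rule ccontr)
    assume nxy: "\<not> dep_le V U x y"
    with comparable have yx: "dep_le V U y x" by blast
    from nxy V obtain b where b: "b \<in> V" "(x, b) \<in> U\<^sup>=" "(y, b) \<notin> U\<^sup>=" unfolding dep_le_def by blast
    then obtain c where c: "(c, x) \<in> M\<^sup>*" "(c, b) \<in> M\<^sup>*"
      using uec_reflcl_iff_common_ancestor[OF M V(1) b(1)] unfolding common_ancestor_def by blast
    have cx: "dep_le V U c x" and cb: "dep_le V U c b"
      using dep_compatible_rtrancl[OF compM c(1) V(1)] dep_compatible_rtrancl[OF compM c(2) b(1)] .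
    then have "c \<in> V" unfolding dep_le_def by blast
    have "common_ancestor M c b" using c(2) unfolding common_ancestor_def by blast
    then have "(c, b) \<in> U\<^sup>=" using uec_reflcl_iff_common_ancestor[OF M \<open>c \<in> V\<close> b(1)] by simp
    with b have ncy: "\<not> dep_le V U c y" unfolding dep_le_def by blast
    have nyc: "\<not> dep_le V U y c"
    proof
      assume "dep_le V U y c"
      then have "dep_le V U y b" using cb by (rule dep_le_trans)
      then have "(b, y) \<in> U\<^sup>=" unfolding dep_le_def by blast
      moreover have "sym U" using M sym_udg unfolding uec_def by blast
      ultimately have "(y, b) \<in> U\<^sup>=" by (auto dest: symD)
      with b(3) show False by contradiction
    qed
    have nxc: "\<not> dep_le V U x c" using dep_le_trans[OF yx] nyc by blast
    have "y \<noteq> c" using nyc dep_le_refl[OF V(2)] by auto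
    with yx nxy cx nxc nyc ncy have "(y, x, c) \<in> v_structures M"
      using v_structures_iff_dep_le[OF acM compM sat] by simp
    then have "(y, x, c) \<in> v_structures D" using ME unfolding markov_equivalent_def by simp
    then have "(y, x) \<in> D" unfolding v_structures_def by simp
    then have "(x, x) \<in> D\<^sup>+" using xy by (rule trancl_into_trancl[OF r_into_trancl, rotated])
    with acyclic show False unfolding acyclic_def by blast
  qed
qed

lemma finite_dag_wf: "finite V \<Longrightarrow> dag V D \<Longrightarrow> wf D"
  unfolding dag_def by (metis finite_acyclic_wf finite_SigmaI finite_subset)

lemma maximal_in_uec_imp_markov_equivalent:
  assumes "maximal_in_uec V U D" "maximal_in_uec V U M"
  shows "markov_equivalent D M"
proof -
  have "D \<in> uec V U" "dep_saturated V U D" "M \<in> uec V U" "dep_saturated V U M"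
    using assms maximal_in_uec_iff by blast+
  then show ?thesis
    using markov_equivalent_if_dep_saturated uec_acyclic uec_dep_compatible by blast
qed

lemma markov_equivalent_imp_maximal_in_uec:
  assumes fin: "finite V" and max: "maximal_in_uec V U M"
    and D: "dag V D" and ME: "markov_equivalent D M"
  shows "maximal_in_uec V U D"
proof -
  have M: "M \<in> uec V U" "dep_saturated V U M" using max maximal_in_uec_iff by blast+
  have acM: "acyclic M" and compM: "dep_compatible V U M"
    using uec_acyclic[OF M(1)] uec_dep_compatible[OF M(1)] .
  have wf: "wf D" "wf M" using finite_dag_wf[OF fin] D M(1) unfolding uec_def by blast+
  have satD: "dep_saturated V U D"
    using markov_equivalent_dep_saturated[OF ME acM compM M(2)] .
  have compD: "dep_compatible V U D"
    using markov_equivalent_dep_compatible[OF ME wf_acyclic[OF wf(1)] M] .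
  have "udg V D = udg V M"
    using udg_eq_if_dep_saturated[OF wf(1) compD satD wf(2) compM M(2)] .
  also have "\<dots> = U" using M(1) unfolding uec_def by blast
  finally have "D \<in> uec V U" using D unfolding uec_def by blast
  with satD show ?thesis using maximal_in_uec_iff by blast
qed

lemma maximal_in_uec_exists:
  assumes fin: "finite V" and E: "E \<in> uec V U"
  obtains M where "maximal_in_uec V U M"
proof -
  have "uec V U \<subseteq> Pow (V \<times> V)" unfolding uec_def dag_def by blast
  with fin have "finite (uec V U)" by (meson finite_Pow_iff finite_SigmaI finite_subset)
  from finite_has_maximal[OF this] E obtain M where
    M: "M \<in> uec V U" and top: "\<And>F. F \<in> uec V U \<Longrightarrow> M \<subseteq> F \<Longrightarrow> M = F"
    by blast
  have "maximal_in_uec V U M" unfolding maximal_in_uec_def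
    using M top[of "insert _ M"] by blast
  then show thesis by (rule that)
qed

theorem corollary5p2:
  fixes V :: "'a set" and U :: "('a \<times> 'a) set"
  assumes "finite V"
    and "uec_representative V U"
  shows "\<exists>D0. dag V D0 \<and>
           {D. maximal_in_uec V U D} = {D. dag V D \<and> markov_equivalent D D0}"
proof -
  obtain E where "E \<in> uec V U"
    using assms(2) unfolding uec_representative_def uec_def by blast
  with assms(1) obtain M where M: "maximal_in_uec V U M" by (rule maximal_in_uec_exists)
  have "maximal_in_uec V U D \<longleftrightarrow> dag V D \<and> markov_equivalent D M" for D
    using maximal_in_uec_imp_markov_equivalent[OF _ M] markov_equivalent_imp_maximal_in_uec[OF assms(1) M]
    unfolding maximal_in_uec_def uec_def by blast
  moreover have "dag V M" using M unfolding maximal_in_uec_def uec_def by blast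
  ultimately show ?thesis by blast
qed

end
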